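(* Let $A$ be an associative (not necessarily unital) algebra over a field satisfying the identity $x_1\cdots x_n=x_{\sigma(1)}\cdots x_{\sigma(n)}$ for some $\sigma\in S_n$, and write $i=\sigma(1)$, $j=\sigma(n)$, where $i\ne 1$ and $j\ne n$. Then $H_{n+2}$ contains all permutations of $\{1,2,\ldots,i+1\}$ and all permutations of $\{j+1,\ldots,n+2\}$ (regarded as elements of $S_{n+2}$ fixing the remaining letters).
   Context: For each $k$, $H_k\subseteq S_k$ is the set of permutations $\tau$ such that $A$ satisfies $x_1\cdots x_k=x_{\tau(1)}\cdots x_{\tau(k)}$ (i.e. $a_1\cdots a_k=a_{\tau(1)}\cdots a_{\tau(k)}$ for all $a_1,\dots,a_k\in A$). *)

theory Defs
  imports Main "HOL.Modules" "HOL-Combinatorics.Permutations"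
begin

fun wprod :: "'a::semigroup_mult list \<Rightarrow> 'a" where
  "wprod [x] = x"
| "wprod (x # y # ys) = x * wprod (y # ys)"
| "wprod [] = undefined"

(* Associative (not necessarily unital) algebra over a field 'k:
   the carrier 'a is a (non-unital) ring, scale is a module structure,
   and multiplication is bilinear with respect to scale. *)
definition assoc_algebra :: "('k::field \<Rightarrow> 'a::ring \<Rightarrow> 'a) \<Rightarrow> bool" where
  "assoc_algebra scale \<longleftrightarrow> module scale \<and>
     (\<forall>c x y. scale c (x * y) = scale c x * y \<and> scale c (x * y) = x * scale c y)"

definition satisfies_perm_id :: "'a::semigroup_mult itself \<Rightarrow> nat \<Rightarrow> (nat \<Rightarrow> nat) \<Rightarrow> bool" where
  "satisfies_perm_id _ k \<tau> \<longleftrightarrow>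
     (\<forall>a :: nat \<Rightarrow> 'a. wprod (map a [1..<k+1]) = wprod (map (\<lambda>m. a (\<tau> m)) [1..<k+1]))"

definition H :: "'a::semigroup_mult itself \<Rightarrow> nat \<Rightarrow> (nat \<Rightarrow> nat) set" where
  "H A k = {\<tau>. \<tau> permutes {1..k} \<and> satisfies_perm_id A k \<tau>}"

end

theory Submission
  imports Defs
begin

text \<open>Let \<open>i = \<sigma> 1\<close> and \<open>j = \<sigma> n\<close>. Substituting \<open>a y\<^sub>i\<close> for \<open>y\<^sub>i\<close> in the identity
  \<open>y\<^sub>1 \<cdots> y\<^sub>n = y\<^sub>\<sigma>\<^sub>1 \<cdots> y\<^sub>\<sigma>\<^sub>n\<close> shows that a left factor jumps over \<open>i - 1\<close> letters:
  \<open>a P Q = P a Q\<close> whenever \<open>|P| = i - 1\<close> and \<open>|P| + |Q| \<ge> n\<close>; dually, a right factor jumps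
  over \<open>n - j\<close> letters. In a word of length \<open>n + 2\<close>, these jumps (applied after merging two
  adjacent letters into one) rotate the window of the first \<open>i + 1\<close> letters cyclically and
  swap its first two letters, and these two moves generate all permutations of the window;
  likewise for the window of the last \<open>n + 2 - j\<close> letters.\<close>

lemma wprod_Cons: "xs \<noteq> [] \<Longrightarrow> wprod (x # xs) = x * wprod xs"
  by (cases xs) auto

lemma wprod_append: "xs \<noteq> [] \<Longrightarrow> ys \<noteq> [] \<Longrightarrow> wprod (xs @ ys) = wprod xs * wprod ys"
  by (induction xs rule: wprod.induct) (auto simp: mult.assoc wprod_Cons)

lemma wprod_append_cong:
  assumes "wprod xs = wprod ys" "xs \<noteq> []" "ys \<noteq> []"
  shows "wprod (xs @ R) = wprod (ys @ R)"
  using assms by (cases "R = []") (simp_all add: wprod_append)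

lemma wprod_split_mult: "wprod (P @ (u * v) # R) = wprod (P @ u # v # R)"
proof (induction P)
  case Nil
  then show ?case by (cases R) (auto simp: mult.assoc)
next
  case (Cons p P)
  then show ?case by (simp add: wprod_Cons)
qed

context
  fixes f :: "'b list \<Rightarrow> 'c" and K :: nat
  assumes rotate1_invariant: "\<And>z w. length w + 1 = K \<Longrightarrow> f (z # w) = f (w @ [z])"
    and swap_invariant: "\<And>x y m. length m + 2 = K \<Longrightarrow> f (x # y # m) = f (y # x # m)"
begin

lemma rotate_invariant: "length xs = K \<Longrightarrow> f (rotate k xs) = f xs"
proof (induction k)
  case 0
  then show ?case by simp
next
  case (Suc k)
  have "f (rotate1 (rotate k xs)) = f (rotate k xs)"
  proof (cases "rotate k xs")
    case (Cons z w)
    then have "length w + 1 = K" using Suc.prems by (metis length_Cons length_rotate Suc_eq_plus1)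
    then show ?thesis using Cons rotate1_invariant by simp
  qed simp
  then show ?case using Suc by simp
qed

lemma adjacent_swap_invariant:
  assumes "length P + 2 + length Q = K"
  shows "f (P @ x # y # Q) = f (P @ y # x # Q)"
proof -
  have "f (P @ x # y # Q) = f (rotate (length P) (P @ x # y # Q))"
    using rotate_invariant[of "P @ x # y # Q" "length P"] assms by simp
  also have "\<dots> = f (x # y # Q @ P)" by (simp add: rotate_append)
  also have "\<dots> = f (y # x # Q @ P)" using swap_invariant assms by simp
  also have "\<dots> = f (rotate (length P) (P @ y # x # Q))" by (simp add: rotate_append)
  also have "\<dots> = f (P @ y # x # Q)"
    using rotate_invariant[of "P @ y # x # Q" "length P"] assms by simp
  finally show ?thesis .
qed

lemma move_left_invariant:
  "length F + length l + 1 + length r = K \<Longrightarrow> f (F @ l @ x # r) = f (F @ x # l @ r)"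
proof (induction l arbitrary: F)
  case Nil
  then show ?case by simp
next
  case (Cons c l)
  have "f (F @ (c # l) @ x # r) = f ((F @ [c]) @ l @ x # r)" by simp
  also have "\<dots> = f ((F @ [c]) @ x # l @ r)" using Cons.IH[of "F @ [c]"] Cons.prems by simp
  also have "\<dots> = f (F @ x # c # l @ r)" using adjacent_swap_invariant[of F "l @ r" x c] Cons.prems by simp
  finally show ?case by simp
qed

lemma mset_invariant_append:
  "length F + length xs = K \<Longrightarrow> mset xs = mset ys \<Longrightarrow> f (F @ xs) = f (F @ ys)"
proof (induction xs arbitrary: F ys)
  case Nil
  then show ?case by simp
next
  case (Cons x xs)
  then obtain l r where ys: "ys = l @ x # r"
    by (metis list.set_intros(1) set_mset_mset split_list)
  have "f (F @ x # xs) = f ((F @ [x]) @ l @ r)"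
    using Cons.IH[of "F @ [x]" "l @ r"] Cons.prems ys by simp
  also have "\<dots> = f (F @ l @ x # r)"
    using move_left_invariant[of F l r x] Cons.prems ys by (simp flip: size_mset)
  finally show ?case using ys by simp
qed

lemma mset_invariant: "length xs = K \<Longrightarrow> mset xs = mset ys \<Longrightarrow> f xs = f ys"
  using mset_invariant_append[of "[]"] by simp

end

lemma map_permutes_mset:
  assumes "\<pi> permutes set L" "distinct L"
  shows "mset (map (\<lambda>m. a (\<pi> m)) L) = mset (map a L)"
proof -
  have "image_mset \<pi> (mset L) = mset L"
    using permutes_image_mset[OF assms(1)] unfolding mset_set_set[OF assms(2)] .
  then have "image_mset a (image_mset \<pi> (mset L)) = image_mset a (mset L)"
    by (rule arg_cong)
  then show ?thesis
    by (simp only: mset_map multiset.map_comp comp_def)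
qed

lemma satisfies_perm_id_word:
  fixes ys :: "'a::semigroup_mult list"
  assumes "satisfies_perm_id TYPE('a) n \<sigma>" and "length ys = n"
  shows "wprod ys = wprod (map (\<lambda>m. ys ! (\<sigma> m - 1)) [1..<n + 1])"
proof -
  have "map (\<lambda>m. ys ! (m - 1)) [1..<n + 1] = ys"
    unfolding assms(2)[symmetric] by (simp del: upt_Suc flip: map_Suc_upt add: map_nth comp_def)
  then show ?thesis
    using assms(1)[unfolded satisfies_perm_id_def, rule_format, of "\<lambda>m. ys ! (m - 1)"] by simp
qed

text \<open>Letter \<open>y\<^sub>k\<close> of a word sits at list position \<open>k - 1\<close>.\<close>

lemma wprod_update_first:
  fixes ys :: "'a::semigroup_mult list"
  assumes perm: "\<sigma> permutes {1..n}" and sat: "satisfies_perm_id TYPE('a) n \<sigma>"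
    and len: "length ys = n" and "n \<noteq> 0"
  shows "wprod (ys[\<sigma> 1 - 1 := a * ys ! (\<sigma> 1 - 1)]) = a * wprod ys"
proof -
  define i where "i = \<sigma> 1"
  define ys' where "ys' = ys[i - 1 := a * ys ! (i - 1)]"
  define rest where "rest = map (\<lambda>m. ys ! (\<sigma> m - 1)) [2..<n + 1]"
  have upt: "[1..<n + 1] = 1 # [2..<n + 1]"
    using \<open>n \<noteq> 0\<close> upt_conv_Cons[of 1 "n + 1"] by (simp add: numeral_2_eq_2 del: upt_Suc)
  have i_in: "i \<in> {1..n}"
    using permutes_in_image[OF perm, of 1] \<open>n \<noteq> 0\<close> by (simp add: i_def)
  have unchanged: "ys' ! (\<sigma> m - 1) = ys ! (\<sigma> m - 1)" if "2 \<le> m" "m \<le> n" for m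
  proof -
    have "\<sigma> m \<in> {1..n}"
      using permutes_in_image[OF perm] that by simp
    moreover have "\<sigma> m \<noteq> i"
      using that inj_eq[OF permutes_inj[OF perm]] by (simp add: i_def)
    ultimately show ?thesis using i_in len by (auto simp: ys'_def nth_list_update)
  qed
  have "map (\<lambda>m. ys' ! (\<sigma> m - 1)) [2..<n + 1] = rest"
    unfolding rest_def by (intro map_cong refl unchanged) auto
  moreover have "ys' ! (i - 1) = a * ys ! (i - 1)"
    using i_in len by (auto simp: ys'_def)
  moreover have "wprod ys' = wprod (ys' ! (i - 1) # map (\<lambda>m. ys' ! (\<sigma> m - 1)) [2..<n + 1])"
    using satisfies_perm_id_word[OF sat, of ys', unfolded upt] len by (simp add: ys'_def i_def)
  ultimately have "wprod ys' = wprod ((a * ys ! (i - 1)) # rest)"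
    by simp
  also have "\<dots> = a * wprod (ys ! (i - 1) # rest)"
    using wprod_split_mult[of "[]"] by simp
  also have "\<dots> = a * wprod ys"
    using satisfies_perm_id_word[OF sat len, unfolded upt] by (simp add: i_def rest_def)
  finally show ?thesis by (simp add: ys'_def i_def)
qed

lemma wprod_update_last:
  fixes ys :: "'a::semigroup_mult list"
  assumes perm: "\<sigma> permutes {1..n}" and sat: "satisfies_perm_id TYPE('a) n \<sigma>"
    and len: "length ys = n" and "n \<noteq> 0"
  shows "wprod (ys[\<sigma> n - 1 := ys ! (\<sigma> n - 1) * b]) = wprod ys * b"
proof -
  define j where "j = \<sigma> n"
  define ys' where "ys' = ys[j - 1 := ys ! (j - 1) * b]"
  define rest where "rest = map (\<lambda>m. ys ! (\<sigma> m - 1)) [1..<n]"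
  have upt: "[1..<n + 1] = [1..<n] @ [n]"
    using \<open>n \<noteq> 0\<close> by simp
  have j_in: "j \<in> {1..n}"
    using permutes_in_image[OF perm, of n] \<open>n \<noteq> 0\<close> by (simp add: j_def)
  have unchanged: "ys' ! (\<sigma> m - 1) = ys ! (\<sigma> m - 1)" if "1 \<le> m" "m < n" for m
  proof -
    have "\<sigma> m \<in> {1..n}"
      using permutes_in_image[OF perm] that by simp
    moreover have "\<sigma> m \<noteq> j"
      using that inj_eq[OF permutes_inj[OF perm]] by (simp add: j_def)
    ultimately show ?thesis using j_in len by (auto simp: ys'_def nth_list_update)
  qed
  have "map (\<lambda>m. ys' ! (\<sigma> m - 1)) [1..<n] = rest"
    unfolding rest_def by (intro map_cong refl unchanged) auto
  moreover have "ys' ! (j - 1) = ys ! (j - 1) * b"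
    using j_in len by (auto simp: ys'_def)
  moreover have "wprod ys' = wprod (map (\<lambda>m. ys' ! (\<sigma> m - 1)) [1..<n] @ [ys' ! (j - 1)])"
    using satisfies_perm_id_word[OF sat, of ys', unfolded upt] len by (simp add: ys'_def j_def)
  ultimately have "wprod ys' = wprod (rest @ [ys ! (j - 1) * b])"
    by simp
  also have "\<dots> = wprod ((rest @ [ys ! (j - 1)]) @ [b])"
    using wprod_split_mult[of rest _ b "[]"] by simp
  also have "\<dots> = wprod ys * b"
    using satisfies_perm_id_word[OF sat len, unfolded upt] wprod_append[of "rest @ [ys ! (j - 1)]" "[b]"]
    by (simp add: j_def rest_def)
  finally show ?thesis by (simp add: ys'_def j_def)
qed

lemma perm_id_left_factor_shift:
  fixes P Q :: "'a::semigroup_mult list"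
  assumes perm: "\<sigma> permutes {1..n}" and sat: "satisfies_perm_id TYPE('a) n \<sigma>"
    and lP: "length P = \<sigma> 1 - 1" and lPQ: "n \<le> length P + length Q"
  shows "wprod (a # P @ Q) = wprod (P @ a # Q)"
proof (cases "n = 0")
  case True
  then show ?thesis using permutes_not_in[OF perm, of 1] lP by simp
next
  case False
  define Q1 where "Q1 = take (n - length P) Q"
  define Q2 where "Q2 = drop (n - length P) Q"
  have "length P < n" using lP permutes_in_image[OF perm, of 1] False by auto
  then have len: "length (P @ Q1) = n" using lPQ by (simp add: Q1_def)
  then obtain q Q1' where Q1: "Q1 = q # Q1'"
    using \<open>length P < n\<close> by (cases Q1) auto
  have "(P @ Q1)[\<sigma> 1 - 1 := a * (P @ Q1) ! (\<sigma> 1 - 1)] = P @ (a * q) # Q1'"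
    unfolding lP[symmetric] by (simp add: Q1)
  then have "wprod (P @ a # Q1) = wprod ((P @ Q1)[\<sigma> 1 - 1 := a * (P @ Q1) ! (\<sigma> 1 - 1)])"
    using wprod_split_mult[of P a q Q1'] by (simp add: Q1)
  also have "\<dots> = a * wprod (P @ Q1)"
    using wprod_update_first[OF perm sat len False] .
  also have "\<dots> = wprod (a # P @ Q1)"
    by (simp add: Q1 wprod_Cons)
  finally have "wprod (a # P @ Q1) = wprod (P @ a # Q1)" ..
  then have "wprod ((a # P @ Q1) @ Q2) = wprod ((P @ a # Q1) @ Q2)"
    by (rule wprod_append_cong) simp_all
  then show ?thesis by (simp add: Q1_def Q2_def)
qed

lemma perm_id_right_factor_shift:
  fixes P Q :: "'a::semigroup_mult list"
  assumes perm: "\<sigma> permutes {1..n}" and sat: "satisfies_perm_id TYPE('a) n \<sigma>"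
    and lP: "length P = \<sigma> n" and lPQ: "length P + length Q = n"
  shows "wprod (P @ Q @ b # R) = wprod (P @ b # Q @ R)"
proof (cases "n = 0")
  case True
  then show ?thesis using lPQ by simp
next
  case False
  have len: "length (P @ Q) = n" using lPQ by simp
  have "\<sigma> n \<noteq> 0" using permutes_in_image[OF perm, of n] False by auto
  then obtain P' p where P: "P = P' @ [p]"
    using lP by (cases P rule: rev_cases) auto
  have "\<sigma> n - 1 = length P'" using lP by (simp add: P)
  then have "(P @ Q)[\<sigma> n - 1 := (P @ Q) ! (\<sigma> n - 1) * b] = P' @ (p * b) # Q"
    by (simp add: P)
  then have "wprod (P @ b # Q) = wprod ((P @ Q)[\<sigma> n - 1 := (P @ Q) ! (\<sigma> n - 1) * b])"
    using wprod_split_mult[of P' p b Q] by (simp add: P)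
  also have "\<dots> = wprod (P @ Q) * b"
    using wprod_update_last[OF perm sat len False] .
  also have "\<dots> = wprod ((P @ Q) @ [b])"
    using wprod_append[of "P @ Q" "[b]"] by (simp add: P)
  finally have "wprod ((P @ Q) @ [b]) = wprod (P @ b # Q)" ..
  then have "wprod (((P @ Q) @ [b]) @ R) = wprod ((P @ b # Q) @ R)"
    by (rule wprod_append_cong) (simp_all add: P)
  then show ?thesis by simp
qed

lemma permutes_first_moved_bounds:
  fixes \<sigma> :: "nat \<Rightarrow> nat"
  assumes "\<sigma> permutes {1..n}" and "\<sigma> 1 \<noteq> 1"
  shows "2 \<le> \<sigma> 1" and "\<sigma> 1 \<le> n"
proof -
  have "1 \<in> {1..n}" using permutes_not_in[OF assms(1)] assms(2) by fastforce
  then have "\<sigma> 1 \<in> {1..n}" using permutes_in_image[OF assms(1)] by simp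
  then show "2 \<le> \<sigma> 1" "\<sigma> 1 \<le> n" using assms(2) by auto
qed

lemma permutes_last_moved_bounds:
  fixes \<sigma> :: "nat \<Rightarrow> nat"
  assumes "\<sigma> permutes {1..n}" and "\<sigma> n \<noteq> n"
  shows "1 \<le> \<sigma> n" and "\<sigma> n < n"
proof -
  have "n \<in> {1..n}" using permutes_not_in[OF assms(1)] assms(2) by fastforce
  then have "\<sigma> n \<in> {1..n}" using permutes_in_image[OF assms(1)] by simp
  then show "1 \<le> \<sigma> n" "\<sigma> n < n" using assms(2) by auto
qed

lemma perm_id_prefix_window:
  fixes xs ys B :: "'a::semigroup_mult list"
  assumes perm: "\<sigma> permutes {1..n}" and sat: "satisfies_perm_id TYPE('a) n \<sigma>"
    and "\<sigma> 1 \<noteq> 1" and lB: "length B = n + 1 - \<sigma> 1"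
    and "length xs = \<sigma> 1 + 1" and "mset xs = mset ys"
  shows "wprod (xs @ B) = wprod (ys @ B)"
proof -
  define i where "i = \<sigma> 1"
  define f where "f = (\<lambda>xs. wprod (xs @ B))"
  have "2 \<le> i" "i \<le> n"
    using permutes_first_moved_bounds[OF perm \<open>\<sigma> 1 \<noteq> 1\<close>] by (simp_all add: i_def)
  have move: "wprod (a # P @ Q) = wprod (P @ a # Q)"
    if "length P = i - 1" "length B \<le> length Q" for a :: 'a and P Q
    using perm_id_left_factor_shift[OF perm sat, of P Q a] that lB \<open>i \<le> n\<close> by (simp add: i_def)
  have rotate1: "f (z # w) = f (w @ [z])" if lw: "length w + 1 = i + 1" for z w
  proof -
    \<comment> \<open>merging \<open>u v\<close> leaves exactly the \<open>i - 1\<close> letters that \<open>z\<close> can jump over\<close>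
    obtain u v w' where w: "w = u # v # w'"
      using lw \<open>2 \<le> i\<close> by (cases w; cases "tl w") auto
    have "f (z # w) = wprod (z # ((u * v) # w') @ B)"
      using wprod_split_mult[of "[z]" u v "w' @ B"] by (simp add: f_def w)
    also have "\<dots> = wprod (((u * v) # w') @ z # B)"
      using move[of "(u * v) # w'" B z] lw by (simp add: w)
    also have "\<dots> = f (w @ [z])"
      using wprod_split_mult[of "[]" u v "w' @ z # B"] by (simp add: f_def w)
    finally show ?thesis .
  qed
  have swap: "f (x # y # m) = f (y # x # m)" if "length m + 2 = i + 1" for x y m
  proof -
    have "f (x # y # m) = f (y # m @ [x])" using rotate1[of "y # m" x] that by simp
    also have "\<dots> = f (m @ [y, x])" using move[of m "x # B" y] that by (simp add: f_def)
    also have "\<dots> = f (x # m @ [y])" using rotate1[of "m @ [y]" x] that by simp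
    also have "\<dots> = f (y # x # m)" using rotate1[of "x # m" y] that by simp
    finally show ?thesis .
  qed
  show ?thesis
    using mset_invariant[where f = f and K = "i + 1", OF rotate1 swap] assms(5,6) by (simp add: f_def i_def)
qed

lemma perm_id_suffix_window:
  fixes xs ys B :: "'a::semigroup_mult list"
  assumes perm: "\<sigma> permutes {1..n}" and sat: "satisfies_perm_id TYPE('a) n \<sigma>"
    and "\<sigma> n \<noteq> n" and lB: "length B = \<sigma> n"
    and "length xs = n + 2 - \<sigma> n" and "mset xs = mset ys"
  shows "wprod (B @ xs) = wprod (B @ ys)"
proof -
  define j where "j = \<sigma> n"
  define f where "f = (\<lambda>xs. wprod (B @ xs))"
  have "j < n"
    using permutes_last_moved_bounds[OF perm \<open>\<sigma> n \<noteq> n\<close>] by (simp add: j_def)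
  have move: "wprod (B @ Q @ b # R) = wprod (B @ b # Q @ R)"
    if "length Q = n - j" for b :: 'a and Q R
    using perm_id_right_factor_shift[OF perm sat lB, of Q b R] that lB \<open>j < n\<close> by (simp add: j_def)
  have rotate1: "f (z # w) = f (w @ [z])" if lw: "length w + 1 = n + 2 - j" for z w
  proof -
    obtain u v w' where w: "w = u # v # w'"
      using lw \<open>j < n\<close> by (cases w; cases "tl w") auto
    have "f (w @ [z]) = wprod (B @ ((u * v) # w') @ z # [])"
      using wprod_split_mult[of B u v "w' @ [z]"] by (simp add: f_def w)
    also have "\<dots> = wprod (B @ z # ((u * v) # w') @ [])"
      using move[of "(u * v) # w'" z "[]"] lw by (simp add: w)
    also have "\<dots> = f (z # w)"
      using wprod_split_mult[of "B @ [z]" u v w'] by (simp add: f_def w)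
    finally show ?thesis ..
  qed
  have swap: "f (x # y # m) = f (y # x # m)" if "length m + 2 = n + 2 - j" for x y m
  proof -
    have "f (x # y # m) = f (y # m @ [x])" using rotate1[of "y # m" x] that by simp
    also have "\<dots> = f (m @ [x, y])" using rotate1[of "m @ [x]" y] that by simp
    also have "\<dots> = f (x # m @ [y])" using move[of m x "[y]"] that by (simp add: f_def)
    also have "\<dots> = f (y # x # m)" using rotate1[of "x # m" y] that by simp
    finally show ?thesis .
  qed
  show ?thesis
    using mset_invariant[where f = f and K = "n + 2 - j", OF rotate1 swap] assms(5,6)
    by (simp add: f_def j_def)
qed

lemma upt_eq_append: "u \<le> v \<Longrightarrow> v \<le> w \<Longrightarrow> [u..<w] = [u..<v] @ [v..<w]"
  using upt_add_eq_append[of u v "w - v"] by simp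

lemma map_upt_permutes_interval:
  assumes "\<pi> permutes {p..<q}" and "l \<le> p" "p \<le> q" "q \<le> r"
  shows "map (\<lambda>m. a (\<pi> m)) [l..<r] = map a [l..<p] @ map (\<lambda>m. a (\<pi> m)) [p..<q] @ map a [q..<r]"
proof -
  have "[l..<r] = [l..<p] @ [p..<q] @ [q..<r]"
    using assms(2-4) upt_eq_append by (metis order.trans)
  moreover have "\<pi> m = m" if "m \<in> set [l..<p] \<union> set [q..<r]" for m
    using permutes_not_in[OF assms(1)] that by auto
  ultimately show ?thesis by simp
qed

lemma permutes_prefix_in_H:
  fixes \<sigma> :: "nat \<Rightarrow> nat"
  assumes perm: "\<sigma> permutes {1..n}" and sat: "satisfies_perm_id TYPE('a::semigroup_mult) n \<sigma>"
    and "\<sigma> 1 \<noteq> 1" and \<pi>: "\<pi> permutes {1..\<sigma> 1 + 1}"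
  shows "\<pi> \<in> H TYPE('a) (n + 2)"
proof -
  define i where "i = \<sigma> 1"
  have "i \<le> n"
    using permutes_first_moved_bounds[OF perm \<open>\<sigma> 1 \<noteq> 1\<close>] by (simp add: i_def)
  have \<pi>': "\<pi> permutes {1..<i + 2}"
    using \<pi> by (simp add: i_def atLeastLessThanSuc_atLeastAtMost)
  have "wprod (map a [1..<n + 2 + 1]) = wprod (map (\<lambda>m. a (\<pi> m)) [1..<n + 2 + 1])"
    for a :: "nat \<Rightarrow> 'a"
  proof -
    have "mset (map (\<lambda>m. a (\<pi> m)) [1..<i + 2]) = mset (map a [1..<i + 2])"
      using map_permutes_mset[of \<pi> "[1..<i + 2]" a] \<pi>' by (simp del: upt_Suc)
    then have "wprod (map a [1..<i + 2] @ map a [i + 2..<n + 3])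
        = wprod (map (\<lambda>m. a (\<pi> m)) [1..<i + 2] @ map a [i + 2..<n + 3])"
      using \<open>i \<le> n\<close>
      by (intro perm_id_prefix_window[OF perm sat \<open>\<sigma> 1 \<noteq> 1\<close>]) (simp_all add: i_def del: upt_Suc)
    moreover have "map (\<lambda>m. a (\<pi> m)) [1..<n + 3] = map (\<lambda>m. a (\<pi> m)) [1..<i + 2] @ map a [i + 2..<n + 3]"
      using map_upt_permutes_interval[OF \<pi>', of 1 "n + 3" a] \<open>i \<le> n\<close> by simp
    moreover have "map a [1..<n + 3] = map a [1..<i + 2] @ map a [i + 2..<n + 3]"
      using upt_eq_append[of 1 "i + 2" "n + 3"] \<open>i \<le> n\<close> by simp
    ultimately show ?thesis by (simp add: numeral_3_eq_3)
  qed
  moreover have "\<pi> permutes {1..n + 2}"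
    using \<pi> permutes_subset \<open>i \<le> n\<close> by (fastforce simp: i_def)
  ultimately show ?thesis unfolding H_def satisfies_perm_id_def by blast
qed

lemma permutes_suffix_in_H:
  fixes \<sigma> :: "nat \<Rightarrow> nat"
  assumes perm: "\<sigma> permutes {1..n}" and sat: "satisfies_perm_id TYPE('a::semigroup_mult) n \<sigma>"
    and "\<sigma> n \<noteq> n" and \<pi>: "\<pi> permutes {\<sigma> n + 1..n + 2}"
  shows "\<pi> \<in> H TYPE('a) (n + 2)"
proof -
  define j where "j = \<sigma> n"
  have "j < n"
    using permutes_last_moved_bounds[OF perm \<open>\<sigma> n \<noteq> n\<close>] by (simp add: j_def)
  have \<pi>': "\<pi> permutes {j + 1..<n + 3}"
    using \<pi> by (simp add: j_def atLeastLessThanSuc_atLeastAtMost numeral_3_eq_3)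
  have "wprod (map a [1..<n + 2 + 1]) = wprod (map (\<lambda>m. a (\<pi> m)) [1..<n + 2 + 1])"
    for a :: "nat \<Rightarrow> 'a"
  proof -
    have "mset (map (\<lambda>m. a (\<pi> m)) [j + 1..<n + 3]) = mset (map a [j + 1..<n + 3])"
      using map_permutes_mset[of \<pi> "[j + 1..<n + 3]" a] \<pi>' by (simp del: upt_Suc)
    then have "wprod (map a [1..<j + 1] @ map a [j + 1..<n + 3])
        = wprod (map a [1..<j + 1] @ map (\<lambda>m. a (\<pi> m)) [j + 1..<n + 3])"
      using \<open>j < n\<close>
      by (intro perm_id_suffix_window[OF perm sat \<open>\<sigma> n \<noteq> n\<close>]) (simp_all add: j_def del: upt_Suc)
    moreover have "map (\<lambda>m. a (\<pi> m)) [1..<n + 3] = map a [1..<j + 1] @ map (\<lambda>m. a (\<pi> m)) [j + 1..<n + 3]"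
      using map_upt_permutes_interval[OF \<pi>', of 1 "n + 3" a] \<open>j < n\<close> by simp
    moreover have "map a [1..<n + 3] = map a [1..<j + 1] @ map a [j + 1..<n + 3]"
      using upt_eq_append[of 1 "j + 1" "n + 3"] \<open>j < n\<close> by simp
    ultimately show ?thesis by (simp add: numeral_3_eq_3)
  qed
  moreover have "\<pi> permutes {1..n + 2}"
    using \<pi> permutes_subset by (fastforce simp: j_def)
  ultimately show ?thesis unfolding H_def satisfies_perm_id_def by blast
qed

theorem lemma2p10:
  fixes scale :: "'k::field \<Rightarrow> 'a::ring \<Rightarrow> 'a"
    and n :: nat and \<sigma> :: "nat \<Rightarrow> nat"
  assumes "assoc_algebra scale"
    and "\<sigma> permutes {1..n}"
    and "satisfies_perm_id TYPE('a) n \<sigma>"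
    and "\<sigma> 1 \<noteq> 1"
    and "\<sigma> n \<noteq> n"
  shows "(\<forall>\<pi>. \<pi> permutes {1..\<sigma> 1 + 1} \<longrightarrow> \<pi> \<in> H TYPE('a) (n + 2))
       \<and> (\<forall>\<pi>. \<pi> permutes {\<sigma> n + 1..n + 2} \<longrightarrow> \<pi> \<in> H TYPE('a) (n + 2))"
  using permutes_prefix_in_H[OF assms(2-4)] permutes_suffix_in_H[OF assms(2,3,5)] by blast

end
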